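(* Let $0<p_i<1$ and $r_i\ge 0$ for $i=1,\dots,n$, indexed so that $r_1/p_1\ge r_2/p_2\ge\dots\ge r_n/p_n$. For $S\subseteq\{1,\dots,n\}$ let $f(S)=\sum_{i\in S} r_i+\prod_{i\in S}(1-p_i)$. Then the maximum of $f(S)$ over all subsets $S$ is attained at $S=\{1,2,\dots,k\}$ for some $0\le k\le n$. *)

theory Defs
  imports Complex_Main
begin

definition fval :: "(nat \<Rightarrow> real) \<Rightarrow> (nat \<Rightarrow> real) \<Rightarrow> nat set \<Rightarrow> real" where
  "fval p r S = (\<Sum>i\<in>S. r i) + (\<Prod>i\<in>S. (1 - p i))"

end

theory Submission
  imports Defs
begin

(* Among all subsets of {1..n} maximising f, pick one, S, of
   maximal cardinality.  We show S is downward closed: if j \<in> S and i < j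
   with i \<notin> S, then optimality of S against S - {j} gives
   p_j * P(S - {j}) \<le> r_j, where P(T) = \<Prod>_{k\<in>T} (1 - p_k).  Since
   r_j/p_j \<le> r_i/p_i and P(S) \<le> P(S - {j}), this yields p_i * P(S) \<le> r_i,
   i.e. adding i to S does not decrease f -- contradicting the maximal
   cardinality of S.  A downward closed subset of {1..n} is an initial
   segment {1..k}, which proves the theorem. *)

lemma fval_insert:
  assumes "finite S" and "i \<notin> S"
  shows "fval p r (insert i S) = fval p r S + r i - p i * (\<Prod>k\<in>S. 1 - p k)"
  using assms by (simp add: fval_def algebra_simps)

lemma fval_exchange:
  fixes p r :: "nat \<Rightarrow> real"
  assumes fin: "finite S" and jS: "j \<in> S" and iS: "i \<notin> S"
    and pi_pos: "0 < p i" and pj_pos: "0 < p j"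
    and p_le1: "\<And>k. k \<in> S \<Longrightarrow> p k \<le> 1"
    and remove_j: "fval p r (S - {j}) \<le> fval p r S"
    and ratio: "r j / p j \<le> r i / p i"
  shows "fval p r S \<le> fval p r (insert i S)"
proof -
  define Q where "Q = (\<Prod>k\<in>S - {j}. 1 - p k)"
  have Q_nonneg: "0 \<le> Q"
    unfolding Q_def using p_le1 by (intro prod_nonneg) auto
  have prod_S: "(\<Prod>k\<in>S. 1 - p k) = (1 - p j) * Q"
    unfolding Q_def using fin jS by (simp add: prod.remove)
  have "fval p r S = fval p r (S - {j}) + r j - p j * Q"
    using fval_insert[of "S - {j}" j p r] fin jS by (simp add: Q_def insert_absorb)
  with remove_j have "Q * p j \<le> r j" by (simp add: algebra_simps)
  then have "Q \<le> r j / p j" using pj_pos by (simp add: pos_le_divide_eq)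
  also have "\<dots> \<le> r i / p i" by (fact ratio)
  finally have "Q * p i \<le> r i" using pi_pos by (simp add: pos_le_divide_eq)
  moreover have "(1 - p j) * Q * p i \<le> Q * p i"
    using Q_nonneg pi_pos pj_pos p_le1[OF jS]
    by (intro mult_right_mono mult_left_le_one_le) auto
  ultimately have "p i * (\<Prod>k\<in>S. 1 - p k) \<le> r i"
    unfolding prod_S by (simp add: mult.commute)
  then show ?thesis using fval_insert[OF fin iS, of p r] by simp
qed

lemma exists_max_card_maximiser:
  fixes g :: "'a set \<Rightarrow> real"
  assumes "finite F" and "F \<noteq> {}"
  obtains S where "S \<in> F" and "\<And>T. T \<in> F \<Longrightarrow> g T \<le> g S"
    and "\<And>T. T \<in> F \<Longrightarrow> g T = g S \<Longrightarrow> card T \<le> card S"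
proof -
  define Opt where "Opt = {S \<in> F. g S = Max (g ` F)}"
  have "Max (g ` F) \<in> g ` F" using assms by simp
  then have "Opt \<noteq> {}" unfolding Opt_def by auto
  moreover have "finite Opt" using assms(1) unfolding Opt_def by simp
  ultimately have "Max (card ` Opt) \<in> card ` Opt" by simp
  then obtain S where S: "S \<in> Opt" "card S = Max (card ` Opt)" by auto
  show ?thesis
  proof
    show "S \<in> F" using S(1) by (simp add: Opt_def)
    show "g T \<le> g S" if "T \<in> F" for T
      using S(1) that assms(1) by (simp add: Opt_def)
    show "card T \<le> card S" if "T \<in> F" "g T = g S" for T
    proof -
      have "T \<in> Opt" using that S(1) by (simp add: Opt_def)
      then show ?thesis unfolding S(2) using \<open>finite Opt\<close> by simp
    qed
  qed
qed

lemma downward_closed_is_initial_segment: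
  fixes S :: "nat set"
  assumes sub: "S \<subseteq> {1..n}"
    and closed: "\<And>i j. j \<in> S \<Longrightarrow> 1 \<le> i \<Longrightarrow> i < j \<Longrightarrow> i \<in> S"
  shows "\<exists>k\<le>n. S = {1..k}"
proof (cases "S = {}")
  case True
  then have "S = {1..0}" by simp
  then show ?thesis by blast
next
  case False
  have fin: "finite S" using sub finite_subset by blast
  then have max_in: "Max S \<in> S" using False by simp
  have "S = {1..Max S}"
  proof
    show "S \<subseteq> {1..Max S}" using sub fin by auto
    show "{1..Max S} \<subseteq> S"
      using closed[OF max_in] max_in by (auto simp: le_less)
  qed
  moreover have "Max S \<le> n" using sub max_in by auto
  ultimately show ?thesis by blast
qed

theorem claim1:
  fixes n :: nat and p r :: "nat \<Rightarrow> real"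
  assumes p_pos: "\<And>i. i \<in> {1..n} \<Longrightarrow> 0 < p i"
    and p_lt1: "\<And>i. i \<in> {1..n} \<Longrightarrow> p i < 1"
    and r_nonneg: "\<And>i. i \<in> {1..n} \<Longrightarrow> 0 \<le> r i"
    and sorted: "\<And>i j. i \<in> {1..n} \<Longrightarrow> j \<in> {1..n} \<Longrightarrow> i \<le> j \<Longrightarrow> r j / p j \<le> r i / p i"
  shows "\<exists>k\<le>n. \<forall>S. S \<subseteq> {1..n} \<longrightarrow> fval p r S \<le> fval p r {1..k}"
proof -
  obtain S where S_sub: "S \<subseteq> {1..n}"
    and S_opt: "\<And>T. T \<subseteq> {1..n} \<Longrightarrow> fval p r T \<le> fval p r S"
    and S_card: "\<And>T. T \<subseteq> {1..n} \<Longrightarrow> fval p r T = fval p r S \<Longrightarrow> card T \<le> card S"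
    using exists_max_card_maximiser[of "Pow {1..n}" "fval p r"] by auto
  have fin: "finite S" using S_sub finite_subset by blast
  have closed: "i \<in> S" if jS: "j \<in> S" and "1 \<le> i" "i < j" for i j
  proof (rule ccontr)
    assume iS: "i \<notin> S"
    have ij_range: "i \<in> {1..n}" "j \<in> {1..n}" using S_sub jS \<open>1 \<le> i\<close> \<open>i < j\<close> by auto
    have "fval p r S \<le> fval p r (insert i S)"
    proof (rule fval_exchange[OF fin jS iS])
      show "0 < p i" "0 < p j" using p_pos ij_range by auto
      show "p k \<le> 1" if "k \<in> S" for k using p_lt1 S_sub that by fastforce
      show "fval p r (S - {j}) \<le> fval p r S" using S_opt S_sub by blast
      show "r j / p j \<le> r i / p i" using sorted ij_range \<open>i < j\<close> by simp
    qed
    then have "card (insert i S) \<le> card S"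
      using S_card[of "insert i S"] S_opt[of "insert i S"] S_sub ij_range by auto
    then show False using fin iS by simp
  qed
  have "\<exists>k\<le>n. S = {1..k}"
    using S_sub closed by (rule downward_closed_is_initial_segment)
  then show ?thesis using S_opt by blast
qed

end
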